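(* Let $d_1,d_2$ be positive integers with $2\leq d_1\leq d_2$. Then $$\binom{d_1+d_2}{d_1}\leq 2d_1d_2$$ if and only if $d_1=2$ and $d_2\leq 4$. *)

theory Defs
  imports Main
begin

end

theory Submission
  imports Defs "HOL.Binomial_Plus"
begin

text \<open>For \<open>d\<^sub>1 = 2\<close> the inequality is the quadratic \<open>(d\<^sub>2 + 2)(d\<^sub>2 + 1) \<le> 8 d\<^sub>2\<close>,
  which holds exactly for \<open>1 \<le> d\<^sub>2 \<le> 4\<close>. For \<open>3 \<le> d\<^sub>1 \<le> d\<^sub>2\<close> put \<open>n = d\<^sub>1 + d\<^sub>2\<close>:
  unimodality of binomial coefficients gives \<open>C(n, d\<^sub>1) \<ge> C(n, 3)\<close>, and
  \<open>C(n, 3) > n\<^sup>2/2 \<ge> 2 d\<^sub>1 d\<^sub>2\<close> once \<open>n \<ge> 6\<close>.\<close>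

lemma choose_three: "6 * (n choose 3) = n * (n - 1) * (n - 2)"
proof -
  have absorb: "3 * (n choose 3) = n * ((n - 1) choose 2)"
    using binomial_absorption[of 2 n] by (simp add: numeral_3_eq_3)
  have pair: "2 * ((n - 1) choose 2) = (n - 1) * (n - 2)"
  proof -
    have "even ((n - 1) * (n - 2))" by (cases n) (auto simp: diff_Suc split: nat.split)
    moreover have "n - 1 - 1 = n - 2" by simp
    ultimately show ?thesis by (simp add: choose_two)
  qed
  have "6 * (n choose 3) = 2 * (3 * (n choose 3))" by simp
  also have "\<dots> = n * (2 * ((n - 1) choose 2))" by (simp only: absorb ac_simps)
  also have "\<dots> = n * (n - 1) * (n - 2)" by (simp only: pair mult.assoc)
  finally show ?thesis .
qed

lemma four_mult_le_square_sum:
  fixes a b :: nat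
  shows "4 * (a * b) \<le> (a + b)\<^sup>2"
proof -
  have "4 * (int a * int b) \<le> (int a + int b)\<^sup>2"
    using zero_le_power2[of "int a - int b"] by (simp add: power2_eq_square algebra_simps)
  then show ?thesis by (simp flip: of_nat_mult of_nat_add of_nat_power)
qed

lemma square_lt_two_mult_choose_three:
  assumes "6 \<le> n"
  shows "n\<^sup>2 < 2 * (n choose 3)"
proof -
  obtain m where n: "n = m + 6" using assms by (metis add.commute le_Suc_ex)
  have "3 * n\<^sup>2 < n * (n - 1) * (n - 2)"
    unfolding n by (simp add: power2_eq_square algebra_simps)
  then show ?thesis using choose_three[of n] by linarith
qed

lemma add_two_choose_two_le_iff: "(m + 2) choose 2 \<le> 4 * m \<longleftrightarrow> 1 \<le> m \<and> m \<le> 4"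
proof -
  have "2 * ((m + 2) choose 2) = (m + 2) * (m + 1)"
    by (simp add: choose_two)
  moreover have "(m + 2) * (m + 1) \<le> 8 * m \<longleftrightarrow> 1 \<le> m \<and> m \<le> 4"
  proof
    assume le: "(m + 2) * (m + 1) \<le> 8 * m"
    have "m \<le> 4"
    proof (rule ccontr)
      assume "\<not> m \<le> 4"
      then have "5 * m \<le> m * m" by simp
      with le show False by (simp add: algebra_simps)
    qed
    with le show "1 \<le> m \<and> m \<le> 4" by auto
  next
    assume "1 \<le> m \<and> m \<le> 4"
    then have "m \<in> {1, 2, 3, 4}" by auto
    then show "(m + 2) * (m + 1) \<le> 8 * m" by auto
  qed
  ultimately show ?thesis by linarith
qed

lemma two_mult_lt_binomial:
  assumes "3 \<le> k" and "k \<le> m"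
  shows "2 * k * m < (k + m) choose k"
proof -
  have "4 * (k * m) \<le> (k + m)\<^sup>2" by (rule four_mult_le_square_sum)
  also have "\<dots> < 2 * ((k + m) choose 3)"
    using assms by (intro square_lt_two_mult_choose_three) simp
  also have "(k + m) choose 3 \<le> (k + m) choose k"
    using assms by (intro binomial_mono) simp_all
  finally show ?thesis by simp
qed

theorem lemmaA3:
  fixes d1 d2 :: nat
  assumes "2 \<le> d1" and "d1 \<le> d2"
  shows "((d1 + d2) choose d1 \<le> 2 * d1 * d2) \<longleftrightarrow> (d1 = 2 \<and> d2 \<le> 4)"
proof (cases "d1 = 2")
  case True
  then show ?thesis
    using assms add_two_choose_two_le_iff[of d2] by (simp add: add.commute)
next
  case False
  with assms have "2 * d1 * d2 < (d1 + d2) choose d1"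
    by (intro two_mult_lt_binomial) simp_all
  with False show ?thesis by simp
qed

end
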